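(* Let $\mathcal{G}$ be the complete quadrilateral, let $R$ be a commutative ring with $2=0$, let $A=M_R(\mathcal{G},1)$ and let $A'=A/\operatorname{Ann}(A)$ (a $5$-dimensional algebra). For each of the $4$ lines $\ell$ of $\mathcal{G}$, let $A'^\ell_0$ and $A'^\ell_1$ be the eigenspaces of the operator $\operatorname{ad}_\ell$ on $A'$ for the eigenvalues $0$ and $1$. Then for each line $\ell$, $A'=A'^\ell_0\oplus A'^\ell_1$ and \[ A'^\ell_0A'^\ell_0\subseteq A'^\ell_0,\quad A'^\ell_0A'^\ell_1\subseteq A'^\ell_1,\quad A'^\ell_1A'^\ell_1=0, \] i.e. $A'$ is a decomposition algebra with fusion law $0*0=\{0\}$, $0*1=1*0=\{1\}$, $1*1=\emptyset$. Moreover, the subspaces $A'^\ell_1$ coincide for all $4$ choices of $\ell$.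
   Context: The complete quadrilateral is the partial linear space with $6$ points $a,b,c,x,y,z$ and $4$ lines $\{a,b,c\}$, $\{a,y,z\}$, $\{b,x,z\}$, $\{c,x,y\}$. For distinct collinear points $p,q$ (written $p\sim q$), $p\wedge q$ is the third point of their line. The nilpotent Matsuo algebra $A=M_R(\mathcal{G},1)$ is the free $R$-module with basis the points and commutative bilinear product $p\cdot q=0$ if $p=q$ or $p\not\sim q$, $p\cdot q=p+q+p\wedge q$ if $p\sim q$. $\operatorname{Ann}(A)=\{v\in A: vw=0\ \forall w\in A\}$, and $A'=A/\operatorname{Ann}(A)$ with induced product. For a line $\ell$ we write $\ell$ also for the sum of its three points, and $\operatorname{ad}_\ell(v)=\ell v$ (also on $A'$). *)

theory Defs
  imports Main
begin

datatype pt = Pa | Pb | Pc | Px | Py | Pz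

definition pts :: "pt set" where
  "pts = {Pa, Pb, Pc, Px, Py, Pz}"

definition lines :: "pt set set" where
  "lines = {{Pa, Pb, Pc}, {Pa, Py, Pz}, {Pb, Px, Pz}, {Pc, Px, Py}}"

definition coll :: "pt \<Rightarrow> pt \<Rightarrow> bool" where
  "coll p q \<longleftrightarrow> p \<noteq> q \<and> (\<exists>L\<in>lines. p \<in> L \<and> q \<in> L)"

definition wedge :: "pt \<Rightarrow> pt \<Rightarrow> pt" where
  "wedge p q = (THE r. r \<noteq> p \<and> r \<noteq> q \<and> (\<exists>L\<in>lines. {p, q, r} \<subseteq> L))"

text \<open>Elements of A = M_R(G,1) are coefficient functions pt => R (free module on the points).\<close>
definition bvec :: "pt \<Rightarrow> pt \<Rightarrow> 'r::comm_ring_1" where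
  "bvec p = (\<lambda>r. if r = p then 1 else 0)"

definition bprod :: "pt \<Rightarrow> pt \<Rightarrow> pt \<Rightarrow> 'r::comm_ring_1" where
  "bprod p q = (if p = q \<or> \<not> coll p q then (\<lambda>r. 0)
               else (\<lambda>r. bvec p r + bvec q r + bvec (wedge p q) r))"

definition mmult :: "(pt \<Rightarrow> 'r::comm_ring_1) \<Rightarrow> (pt \<Rightarrow> 'r) \<Rightarrow> (pt \<Rightarrow> 'r)" where
  "mmult v w = (\<lambda>r. \<Sum>p\<in>pts. \<Sum>q\<in>pts. v p * w q * bprod p q r)"

definition linevec :: "pt set \<Rightarrow> pt \<Rightarrow> 'r::comm_ring_1" where
  "linevec L = (\<lambda>r. if r \<in> L then 1 else 0)"

definition Ann :: "(pt \<Rightarrow> 'r::comm_ring_1) set" where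
  "Ann = {v. \<forall>w. mmult v w = (\<lambda>r. 0)}"

text \<open>Preimage in A of the eigenspace of ad_L on A' = A/Ann(A) for eigenvalue mu:
  [v] is a mu-eigenvector of ad_L on A' iff L v - mu v lies in Ann(A).\<close>
definition eigsp :: "pt set \<Rightarrow> 'r::comm_ring_1 \<Rightarrow> (pt \<Rightarrow> 'r) set" where
  "eigsp L mu = {v. (\<lambda>r. mmult (linevec L) v r - mu * v r) \<in> Ann}"

end

theory Submission
  imports Defs
begin

text \<open>Expanding the product bilinearly, the product of two distinct points on a line L is L
  itself, so v w is the combination of the four line vectors whose coefficient at L is
  \<open>\<Sum>\<^bsub>p \<noteq> q \<in> L\<^esub> v p w q\<close>. In characteristic 2 this makes
  everything explicit: Ann(A) is the constant vectors; the 1-eigenvectors of every ad L are the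
  vectors invariant under the involution swapping each point with the unique point not collinear
  to it, so the four 1-eigenspaces agree; and the 0-eigenvectors of ad L are the vectors
  constant off L. The involution exchanges L with its complement, which splits every vector.
  For 0-eigenvectors v, w the coefficients of the three lines other than L vanish, as each
  meets the complement of L in two points on which v and w agree; hence v w is a multiple of L.
  The invariant vectors form an ideal with zero square.\<close>

lemma line_cases [consumes 1, case_names abc ayz bxz cxy]:
  assumes "L \<in> lines"
    and "L = {Pa, Pb, Pc} \<Longrightarrow> P" "L = {Pa, Py, Pz} \<Longrightarrow> P"
    and "L = {Pb, Px, Pz} \<Longrightarrow> P" "L = {Pc, Px, Py} \<Longrightarrow> P"
  shows P
  using assms unfolding lines_def by blast

lemma finite_lines: "finite lines"
  unfolding lines_def by simp

lemma line_through_two_points_unique: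
  assumes "L \<in> lines" "L' \<in> lines" "{p, q} \<subseteq> L" "{p, q} \<subseteq> L'" "p \<noteq> q"
  shows "L = L'"
  using assms unfolding lines_def by (elim insertE emptyE; auto)

lemma line_eq_third_point:
  assumes "L \<in> lines" "{p, q} \<subseteq> L" "p \<noteq> q"
  obtains r where "L = {p, q, r}" "r \<noteq> p" "r \<noteq> q"
  using assms(1) by (cases rule: line_cases) (use assms(2,3) in auto)

lemma wedge_eq_third_point:
  assumes "L \<in> lines" "L = {p, q, r}" "p \<noteq> q" "r \<noteq> p" "r \<noteq> q"
  shows "wedge p q = r"
  unfolding wedge_def
proof (rule the_equality)
  show "r \<noteq> p \<and> r \<noteq> q \<and> (\<exists>L\<in>lines. {p, q, r} \<subseteq> L)"
    using assms by auto
next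
  fix r' assume r': "r' \<noteq> p \<and> r' \<noteq> q \<and> (\<exists>L\<in>lines. {p, q, r'} \<subseteq> L)"
  then obtain L' where "L' \<in> lines" "{p, q, r'} \<subseteq> L'" by blast
  moreover have "{p, q} \<subseteq> L" using assms(2) by auto
  ultimately have "L' = L"
    using line_through_two_points_unique assms(1,3) by auto
  with r' \<open>{p, q, r'} \<subseteq> L'\<close> assms(2) show "r' = r" by auto
qed

lemma bprod_eq_linevec:
  assumes "L \<in> lines" "{p, q} \<subseteq> L" "p \<noteq> q"
  shows "bprod p q = linevec L"
proof -
  obtain r where L: "L = {p, q, r}" "r \<noteq> p" "r \<noteq> q"
    using line_eq_third_point[OF assms] .
  have "wedge p q = r" using wedge_eq_third_point[OF assms(1) L(1) assms(3) L(2,3)] .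
  moreover have "coll p q" using assms unfolding coll_def by auto
  ultimately have "bprod p q = (\<lambda>s. bvec p s + bvec q s + bvec r s)"
    using assms(3) unfolding bprod_def by simp
  also have "\<dots> = linevec L"
    using L assms(3) by (auto simp: fun_eq_iff bvec_def linevec_def)
  finally show ?thesis .
qed

lemma bprod_eq_sum_lines:
  "(bprod p q :: pt \<Rightarrow> 'r::comm_ring_1)
    = (\<lambda>r. \<Sum>L\<in>lines. if {p, q} \<subseteq> L \<and> p \<noteq> q then linevec L r else 0)"
proof (cases "coll p q")
  case True
  then obtain L where L: "L \<in> lines" "{p, q} \<subseteq> L" "p \<noteq> q" unfolding coll_def by auto
  have "{L' \<in> lines. {p, q} \<subseteq> L' \<and> p \<noteq> q} = {L}"
    using L line_through_two_points_unique[OF _ L(1)] by auto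
  then have sum_eq: "(\<Sum>L'\<in>lines. if {p, q} \<subseteq> L' \<and> p \<noteq> q then linevec L' r else 0)
      = (linevec L r :: 'r)" for r
    by (simp add: sum.inter_filter[symmetric] finite_lines)
  show ?thesis unfolding bprod_eq_linevec[OF L] sum_eq ..
next
  case False
  then have "\<not> ({p, q} \<subseteq> L \<and> p \<noteq> q)" if "L \<in> lines" for L
    using that unfolding coll_def by auto
  then have "(\<Sum>L\<in>lines. if {p, q} \<subseteq> L \<and> p \<noteq> q then linevec L r else 0) = (0 :: 'r)" for r
    by (intro sum.neutral) auto
  with False show ?thesis unfolding bprod_def by simp
qed

definition line_coeff :: "pt set \<Rightarrow> (pt \<Rightarrow> 'r::comm_ring_1) \<Rightarrow> (pt \<Rightarrow> 'r) \<Rightarrow> 'r" where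
  "line_coeff L v w = (\<Sum>p\<in>L. \<Sum>q\<in>L - {p}. v p * w q)"

lemma sum_pts_restrict:
  assumes "L \<subseteq> pts"
  shows "(\<Sum>p\<in>pts. if p \<in> L then f p else 0) = (\<Sum>p\<in>L. f p)"
  using assms by (simp add: sum.inter_restrict[symmetric] pts_def Int_absorb1)

lemma line_coeff_eq_sum_pts:
  assumes "L \<in> lines"
  shows "line_coeff L v w = (\<Sum>p\<in>pts. \<Sum>q\<in>pts. if {p, q} \<subseteq> L \<and> p \<noteq> q then v p * w q else 0)"
proof -
  have L: "L \<subseteq> pts" "L - {p} \<subseteq> pts" for p
    using assms unfolding lines_def pts_def by auto
  have "line_coeff L v w
      = (\<Sum>p\<in>pts. if p \<in> L then \<Sum>q\<in>pts. if q \<in> L - {p} then v p * w q else 0 else 0)"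
    unfolding line_coeff_def by (simp only: sum_pts_restrict L)
  also have "\<dots> = (\<Sum>p\<in>pts. \<Sum>q\<in>pts. if {p, q} \<subseteq> L \<and> p \<noteq> q then v p * w q else 0)"
    by (rule sum.cong[OF refl]) (auto intro: sum.cong)
  finally show ?thesis .
qed

lemma mmult_eq_sum_lines:
  "mmult v w = (\<lambda>r. \<Sum>L\<in>lines. line_coeff L v w * linevec L r)"
proof
  fix r
  have "mmult v w r = (\<Sum>p\<in>pts. \<Sum>q\<in>pts. \<Sum>L\<in>lines.
      (if {p, q} \<subseteq> L \<and> p \<noteq> q then v p * w q else 0) * linevec L r)"
    unfolding mmult_def bprod_eq_sum_lines sum_distrib_left
    by (rule sum.cong[OF refl])+ simp
  also have "\<dots> = (\<Sum>L\<in>lines. \<Sum>p\<in>pts. \<Sum>q\<in>pts.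
      (if {p, q} \<subseteq> L \<and> p \<noteq> q then v p * w q else 0) * linevec L r)"
    by (rule trans[OF sum.cong[OF refl sum.swap] sum.swap])
  also have "\<dots> = (\<Sum>L\<in>lines. line_coeff L v w * linevec L r)"
    by (rule sum.cong[OF refl]) (simp add: line_coeff_eq_sum_pts sum_distrib_right)
  finally show "mmult v w r = (\<Sum>L\<in>lines. line_coeff L v w * linevec L r)" .
qed

lemma all_pt: "(\<forall>p. P p) \<longleftrightarrow> P Pa \<and> P Pb \<and> P Pc \<and> P Px \<and> P Py \<and> P Pz"
  by (metis pt.exhaust)

lemma sum_lines:
  "(\<Sum>L\<in>lines. f L) = f {Pa, Pb, Pc} + f {Pa, Py, Pz} + f {Pb, Px, Pz} + f {Pc, Px, Py}"
  unfolding lines_def by (simp add: set_eq_iff all_pt add.assoc)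

lemma line_coeff_triple:
  assumes "distinct [p, q, s]"
  shows "line_coeff {p, q, s} v w
    = v p * w q + v q * w p + v p * w s + v s * w p + v q * w s + v s * w q"
  using assms unfolding line_coeff_def by (auto simp: insert_Diff_if algebra_simps)

lemma mmult_apply:
  "mmult v w r = (\<Sum>L\<in>lines. if r \<in> L then line_coeff L v w else 0)"
  unfolding mmult_eq_sum_lines linevec_def by (simp add: if_distrib cong: if_cong)

lemmas mmult_coordinates = mmult_apply sum_lines line_coeff_triple

lemma lines_meet:
  assumes "L \<in> lines" "L' \<in> lines" "L \<noteq> L'"
  obtains s where "L \<inter> L' = {s}"
  using assms by (elim line_cases) auto

lemma line_eq_triple:
  assumes "L \<in> lines" "s \<in> L"
  obtains p q where "L = {s, p, q}" "distinct [s, p, q]"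
  using assms(1) by (cases rule: line_cases) (use assms(2) in \<open>auto simp: insert_commute\<close>)

text \<open>\<open>opp p\<close> is the unique point not collinear with \<open>p\<close>.\<close>

fun opp :: "pt \<Rightarrow> pt" where
  "opp Pa = Px" | "opp Px = Pa" | "opp Pb = Py" | "opp Py = Pb" | "opp Pc = Pz" | "opp Pz = Pc"

lemma opp_opp [simp]: "opp (opp p) = p"
  by (cases p) auto

lemma opp_in_line_iff: "L \<in> lines \<Longrightarrow> opp p \<in> L \<longleftrightarrow> p \<notin> L"
  by (cases p; erule line_cases) auto

lemma opp_invariant_iff:
  "(\<forall>p. v (opp p) = v p) \<longleftrightarrow> v Px = v Pa \<and> v Py = v Pb \<and> v Pz = v Pc"
  by (auto simp: all_pt)

context
  assumes char2: "(2::'r::comm_ring_1) = 0"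
begin

lemma add_self_char2: "(x::'r) + x = 0"
  by (metis mult_2 mult_zero_left char2)

lemma add_left_self_char2: "(x::'r) + (x + y) = y"
  by (simp add: add.assoc[symmetric] add_self_char2)

lemma add_eq_0_iff_char2: "(x::'r) + y = 0 \<longleftrightarrow> x = y"
  by (metis add_self_char2 add.assoc add_0 add.commute)

lemma diff_eq_add_char2: "(x::'r) - y = x + y"
  using add_eq_0_iff_char2[of y "- y"] by simp

lemma mult_2_char2: "2 * (x::'r) = 0"
  by (simp add: char2)

lemmas char2_simps = add_self_char2 add_left_self_char2 mult_2_char2 diff_eq_add_char2

lemma Ann_iff_constant: "(f::pt \<Rightarrow> 'r) \<in> Ann \<longleftrightarrow> (\<forall>p q. f p = f q)"
proof
  assume "f \<in> Ann"
  then have f_mult: "mmult f w r = 0" for w r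
    unfolding Ann_def by simp
  have "f Pb = f Pc" "f Py = f Pz"
    using f_mult[of "bvec Pa" Pb] f_mult[of "bvec Pa" Py]
    by (simp_all add: mmult_coordinates bvec_def add_eq_0_iff_char2)
  moreover have "f Pa = f Pb" "f Px = f Py"
    using f_mult[of "bvec Pc" Pa] f_mult[of "bvec Pc" Px]
    by (simp_all add: mmult_coordinates bvec_def add_eq_0_iff_char2)
  moreover have "f Pb = f Pz"
    using f_mult[of "bvec Px" Pb]
    by (simp add: mmult_coordinates bvec_def add_eq_0_iff_char2)
  ultimately show "\<forall>p q. f p = f q"
    by (simp add: all_pt)
next
  assume "\<forall>p q. f p = f q"
  then have "f = (\<lambda>_. f Pa)" by auto
  then show "f \<in> Ann"
    unfolding Ann_def
    by (auto simp: fun_eq_iff all_pt mmult_coordinates char2_simps algebra_simps)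
qed

lemma eigsp_one_iff:
  assumes "L \<in> lines"
  shows "(v::pt \<Rightarrow> 'r) \<in> eigsp L 1 \<longleftrightarrow> (\<forall>p. v (opp p) = v p)"
  using assms
  by (cases rule: line_cases;
      simp add: eigsp_def Ann_iff_constant all_pt mmult_coordinates linevec_def char2_simps;
      auto simp: add_ac)

lemma eigsp_zero_iff:
  assumes "L \<in> lines"
  shows "(v::pt \<Rightarrow> 'r) \<in> eigsp L 0 \<longleftrightarrow> (\<forall>p q. p \<notin> L \<longrightarrow> q \<notin> L \<longrightarrow> v p = v q)"
  using assms
  by (cases rule: line_cases;
      simp add: eigsp_def Ann_iff_constant all_pt mmult_coordinates linevec_def char2_simps;
      auto simp: add_ac)

lemma eigsp_one_eq:
  assumes "L \<in> lines" "L' \<in> lines"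
  shows "eigsp L (1::'r) = eigsp L' 1"
  using eigsp_one_iff[OF assms(1)] eigsp_one_iff[OF assms(2)] by blast

lemma eigsp_zero_one_decomposition:
  assumes L: "L \<in> lines"
  shows "\<exists>v0 v1. v0 \<in> eigsp L 0 \<and> v1 \<in> eigsp L 1 \<and> (v::pt \<Rightarrow> 'r) = (\<lambda>r. v0 r + v1 r)"
proof (intro exI conjI)
  define v1 where "v1 = (\<lambda>r. if r \<in> L then v (opp r) else v r)"
  show "v1 \<in> eigsp L 1"
    unfolding eigsp_one_iff[OF L] v1_def by (simp add: opp_in_line_iff[OF L])
  show "(\<lambda>r. v r - v1 r) \<in> eigsp L 0"
    unfolding eigsp_zero_iff[OF L] v1_def by simp
  show "v = (\<lambda>r. (v r - v1 r) + v1 r)"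
    by simp
qed

lemma eigsp_zero_inter_one_subset_Ann:
  assumes L: "L \<in> lines"
  shows "eigsp L 0 \<inter> eigsp L 1 \<subseteq> (Ann :: (pt \<Rightarrow> 'r) set)"
proof (rule subsetI, elim IntE)
  fix v :: "pt \<Rightarrow> 'r"
  assume v0: "v \<in> eigsp L 0" and v1: "v \<in> eigsp L 1"
  from v0 have off_L: "v p = v q" if "p \<notin> L" "q \<notin> L" for p q
    using that unfolding eigsp_zero_iff[OF L] by blast
  from v1 have opp: "v (opp p) = v p" for p
    unfolding eigsp_one_iff[OF L] by blast
  have "\<exists>p'. p' \<notin> L \<and> v p' = v p" for p
    using opp[of p] opp_in_line_iff[OF L, of p] by (cases "p \<in> L") auto
  then have "v p = v q" for p q
    using off_L by metis
  then show "v \<in> Ann"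
    unfolding Ann_iff_constant by blast
qed

lemma line_coeff_eq_0_char2:
  assumes "distinct [s, p, q]" "v q = v p" "w q = w p"
  shows "line_coeff {s, p, q} v (w::pt \<Rightarrow> 'r) = 0"
  using assms by (simp add: line_coeff_triple char2_simps algebra_simps)

lemma mmult_eigsp_zero_zero:
  assumes L: "L \<in> lines" and v: "v \<in> eigsp L 0" and w: "w \<in> eigsp L 0"
  shows "(mmult v w :: pt \<Rightarrow> 'r) \<in> eigsp L 0"
proof -
  have coeff_0: "line_coeff l v w = 0" if l: "l \<in> lines" "l \<noteq> L" for l
  proof -
    obtain s where s: "l \<inter> L = {s}" using lines_meet[OF l(1) L l(2)] .
    then obtain p q where pq: "l = {s, p, q}" "distinct [s, p, q]"
      using line_eq_triple[OF l(1)] by blast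
    with s have "p \<notin> L" "q \<notin> L" by auto
    then have "v q = v p" "w q = w p"
      using v w unfolding eigsp_zero_iff[OF L] by blast+
    with pq show ?thesis using line_coeff_eq_0_char2 by blast
  qed
  have "(\<Sum>l\<in>lines. line_coeff l v w * linevec l r) = line_coeff L v w * linevec L r" for r
    using sum.mono_neutral_left[OF finite_lines, of "{L}" "\<lambda>l. line_coeff l v w * linevec l r"]
      L coeff_0 by auto
  then have "mmult v w = (\<lambda>r. line_coeff L v w * linevec L r)"
    unfolding mmult_eq_sum_lines by simp
  then show ?thesis
    unfolding eigsp_zero_iff[OF L] by (simp add: linevec_def)
qed

text \<open>\<open>(v w) p + (v w) (opp p)\<close> is the sum of all four line coefficients, which vanishes
  when \<open>w\<close> is invariant.\<close>

lemma mmult_opp_invariant_right: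
  assumes "\<forall>p. w (opp p) = w p"
  shows "\<forall>p. (mmult v w :: pt \<Rightarrow> 'r) (opp p) = mmult v w p"
  using assms unfolding opp_invariant_iff
  by (simp add: all_pt mmult_coordinates char2_simps algebra_simps)

lemma mmult_opp_invariant_eq_0:
  assumes "\<forall>p. v (opp p) = v p" "\<forall>p. w (opp p) = w p"
  shows "(mmult v w :: pt \<Rightarrow> 'r) = (\<lambda>_. 0)"
proof
  fix r
  show "mmult v w r = 0"
    using assms unfolding opp_invariant_iff
    by (cases r) (simp_all add: mmult_coordinates char2_simps algebra_simps)
qed

lemma mmult_eigsp_zero_one:
  assumes "L \<in> lines" "w \<in> eigsp L 1"
  shows "(mmult v w :: pt \<Rightarrow> 'r) \<in> eigsp L 1"
  using assms(2) mmult_opp_invariant_right unfolding eigsp_one_iff[OF assms(1)] by blast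

lemma mmult_eigsp_one_one:
  assumes L: "L \<in> lines" and "v \<in> eigsp L 1" "w \<in> eigsp L 1"
  shows "(mmult v w :: pt \<Rightarrow> 'r) \<in> Ann"
  using assms mmult_opp_invariant_eq_0 unfolding eigsp_one_iff[OF L]
  by (simp add: Ann_iff_constant)

end

theorem corollary5p15:
  assumes "(2::'r::comm_ring_1) = 0"
  shows "(\<forall>L\<in>lines.
            (\<forall>v::pt \<Rightarrow> 'r. \<exists>v0 v1. v0 \<in> eigsp L 0 \<and> v1 \<in> eigsp L 1 \<and> v = (\<lambda>r. v0 r + v1 r))
          \<and> eigsp L (0::'r) \<inter> eigsp L 1 \<subseteq> Ann
          \<and> (\<forall>v\<in>eigsp L (0::'r). \<forall>w\<in>eigsp L 0. mmult v w \<in> eigsp L 0)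
          \<and> (\<forall>v\<in>eigsp L (0::'r). \<forall>w\<in>eigsp L 1. mmult v w \<in> eigsp L 1)
          \<and> (\<forall>v\<in>eigsp L (1::'r). \<forall>w\<in>eigsp L 1. mmult v w \<in> Ann))
        \<and> (\<forall>L\<in>lines. \<forall>L'\<in>lines. eigsp L (1::'r) = eigsp L' 1)"
  by (intro conjI ballI allI)
    (rule eigsp_zero_one_decomposition[OF assms] eigsp_zero_inter_one_subset_Ann[OF assms]
      mmult_eigsp_zero_zero[OF assms] mmult_eigsp_zero_one[OF assms]
      mmult_eigsp_one_one[OF assms] eigsp_one_eq[OF assms]; assumption)+

end
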